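(* Let $A=[A_1,\dots,A_n]\in\mathbb{R}^{p\times n}$ satisfy $A\mathbf{1}=\mathbf{0}$, and let $r$ be a positive integer with $r\le \operatorname{rank}(A)$. Let $A=U\Sigma V$ be the compact SVD of $A$ with singular values in descending order, where $V$ has orthonormal rows, and let $V_{1:r}$ denote the first $r$ rows of $V$. Put $\beta=-\min_{i,j}(A^TA)_{ij}$, $\tilde A=\begin{bmatrix}\sqrt{\beta}\,\mathbf{1}^T\\ A\end{bmatrix}$, $W=\tilde A^T\tilde A$ and $L=\operatorname{diag}(W\mathbf{1})-W$. Then $W$ has nonnegative entries, $W_{ij}=\phi(A_i,A_j)$ for the linear kernel $\phi(A_i,A_j)=A_i^TA_j+\beta$, and $L$ is its graph Laplacian. Moreover, the PCA problem $$\min_{D\in\mathbb{R}^{p\times r},\,X\in\mathbb{R}^{r\times n}}\|A-DX\|_F^2\quad\text{s.t. } XX^T=I$$ and the Laplacian-eigenmap problem $$\min_{X\in\mathbb{R}^{r\times n}}\operatorname{tr}\{\tilde XL\tilde X^T\}\quad\text{s.t. }\tilde X=\begin{bmatrix}\tfrac{1}{\sqrt n}\mathbf{1}^T\\ X\end{bmatrix},\ \tilde X\tilde X^T=I$$ have the same solutions $X$; in particular $X=V_{1:r}$ is a common solution.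
   Context: $\mathbf{1}$ denotes the all-ones vector of the appropriate length and $\operatorname{diag}(v)$ the diagonal matrix with diagonal $v$. Columns of $A$ are the $n$ data samples. *)

theory Defs
  imports "Jordan_Normal_Form.DL_Rank"
begin

definition mtrace :: "real mat \<Rightarrow> real" where
  "mtrace M = (\<Sum>i<dim_row M. M $$ (i,i))"

definition frob_sq :: "real mat \<Rightarrow> real" where
  "frob_sq M = (\<Sum>i<dim_row M. \<Sum>j<dim_col M. (M $$ (i,j))\<^sup>2)"

definition ones_vec :: "nat \<Rightarrow> real vec" where
  "ones_vec n = vec n (\<lambda>_. 1)"

definition graph_laplacian :: "real mat \<Rightarrow> real mat" where
  "graph_laplacian W = mat_diag (dim_row W) (\<lambda>i. (W *\<^sub>v ones_vec (dim_col W)) $ i) - W"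

definition compact_svd :: "nat \<Rightarrow> nat \<Rightarrow> real mat \<Rightarrow> real mat \<Rightarrow> real mat \<Rightarrow> real mat \<Rightarrow> bool" where
  "compact_svd p n A U S V \<longleftrightarrow>
     (let k = vec_space.rank p A in
      U \<in> carrier_mat p k \<and> S \<in> carrier_mat k k \<and> V \<in> carrier_mat k n \<and>
      transpose_mat U * U = 1\<^sub>m k \<and> V * transpose_mat V = 1\<^sub>m k \<and>
      (\<forall>i<k. \<forall>j<k. i \<noteq> j \<longrightarrow> S $$ (i,j) = 0) \<and>
      (\<forall>i<k. S $$ (i,i) > 0) \<and>
      (\<forall>i<k. \<forall>j<k. i \<le> j \<longrightarrow> S $$ (j,j) \<le> S $$ (i,i)) \<and>
      A = U * S * V)"

definition first_rows :: "nat \<Rightarrow> real mat \<Rightarrow> real mat" where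
  "first_rows r V = mat r (dim_col V) (\<lambda>(i,j). V $$ (i,j))"

definition beta_of :: "real mat \<Rightarrow> real" where
  "beta_of A = - Min {(transpose_mat A * A) $$ (i,j) | i j. i < dim_col A \<and> j < dim_col A}"

definition A_tilde :: "real mat \<Rightarrow> real mat" where
  "A_tilde A = mat (dim_row A + 1) (dim_col A)
     (\<lambda>(i,j). if i = 0 then sqrt (beta_of A) else A $$ (i - 1, j))"

definition X_tilde :: "nat \<Rightarrow> real mat \<Rightarrow> real mat" where
  "X_tilde n X = mat (dim_row X + 1) n
     (\<lambda>(i,j). if i = 0 then 1 / sqrt (real n) else X $$ (i - 1, j))"

definition pca_solution :: "nat \<Rightarrow> nat \<Rightarrow> nat \<Rightarrow> real mat \<Rightarrow> real mat \<Rightarrow> bool" where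
  "pca_solution p n r A X \<longleftrightarrow>
     X \<in> carrier_mat r n \<and> X * transpose_mat X = 1\<^sub>m r \<and>
     (\<exists>D \<in> carrier_mat p r.
        \<forall>D' \<in> carrier_mat p r. \<forall>X' \<in> carrier_mat r n. X' * transpose_mat X' = 1\<^sub>m r \<longrightarrow>
          frob_sq (A - D * X) \<le> frob_sq (A - D' * X'))"

definition le_solution :: "nat \<Rightarrow> nat \<Rightarrow> real mat \<Rightarrow> real mat \<Rightarrow> bool" where
  "le_solution n r L X \<longleftrightarrow>
     X \<in> carrier_mat r n \<and> X_tilde n X * transpose_mat (X_tilde n X) = 1\<^sub>m (r + 1) \<and>
     (\<forall>X' \<in> carrier_mat r n. X_tilde n X' * transpose_mat (X_tilde n X') = 1\<^sub>m (r + 1) \<longrightarrow>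
        mtrace (X_tilde n X * L * transpose_mat (X_tilde n X))
          \<le> mtrace (X_tilde n X' * L * transpose_mat (X_tilde n X')))"

end

theory Submission
  imports Defs
begin

text \<open>For X with orthonormal rows the best D is A X^T, and the PCA residual is
  |A|^2 - |A X^T|^2; so PCA maximises the projected energy |A X^T|^2. Writing A = U S V, this
  energy is the sum of s_l^2 w_l with weights 0 <= w_l <= 1 summing to at most r (Bessel), hence
  at most s_1^2 + ... + s_r^2 (Ky Fan), with equality only if the rows of X lie in the row space
  of V. Since A 1 = 0 forces V 1 = 0, every maximiser is centred.

  On the other side, A 1 = 0 makes every degree of W equal to n beta, so
  L = n beta I - beta 1 1^T - A^T A, and for feasible X (orthonormal and centred rows) the first
  row 1^T/sqrt n of the stacked matrix contributes nothing:
  tr(X~ L X~^T) = n beta r - |A X^T|^2. Both problems thus select the maximisers of the projected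
  energy, and V_{1:r} is one of them.\<close>

definition orthonormal_rows :: "nat \<Rightarrow> nat \<Rightarrow> (nat \<Rightarrow> nat \<Rightarrow> real) \<Rightarrow> bool" where
  "orthonormal_rows m n X \<longleftrightarrow>
     (\<forall>b<m. \<forall>c<m. (\<Sum>j<n. X b j * X c j) = (if b = c then 1 else 0))"

lemma orthonormal_rows_norm:
  "orthonormal_rows m n X \<Longrightarrow> b < m \<Longrightarrow> (\<Sum>j<n. (X b j)\<^sup>2) = 1"
  unfolding orthonormal_rows_def by (simp add: power2_eq_square)

lemma sum_square_orthonormal_combination:
  assumes "orthonormal_rows k p E"
  shows "(\<Sum>a<p. (\<Sum>l<k. y l * E l a)\<^sup>2) = (\<Sum>l<k. (y l)\<^sup>2)"
proof -
  have "(\<Sum>a<p. (\<Sum>l<k. y l * E l a)\<^sup>2) = (\<Sum>a<p. \<Sum>l<k. \<Sum>m<k. y l * y m * (E l a * E m a))"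
    by (simp add: power2_eq_square sum_product algebra_simps)
  also have "\<dots> = (\<Sum>l<k. \<Sum>m<k. y l * y m * (\<Sum>a<p. E l a * E m a))"
    by (simp add: sum_distrib_left sum.swap[of _ "{..<p}"])
  also have "\<dots> = (\<Sum>l<k. \<Sum>m<k. y l * y m * (if l = m then 1 else 0))"
    using assms unfolding orthonormal_rows_def by (intro sum.cong refl) simp
  also have "\<dots> = (\<Sum>l<k. (y l)\<^sup>2)"
    by (simp add: power2_eq_square if_distrib sum.delta cong: if_cong)
  finally show ?thesis .
qed

lemma sum_square_residual_orthonormal:
  assumes "orthonormal_rows r n E"
  shows "(\<Sum>j<n. (x j - (\<Sum>b<r. d b * E b j))\<^sup>2)
       = (\<Sum>j<n. (x j)\<^sup>2) - (\<Sum>b<r. (\<Sum>j<n. E b j * x j)\<^sup>2)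
         + (\<Sum>b<r. (d b - (\<Sum>j<n. E b j * x j))\<^sup>2)"
proof -
  have cross: "(\<Sum>j<n. x j * (\<Sum>b<r. d b * E b j)) = (\<Sum>b<r. d b * (\<Sum>j<n. E b j * x j))"
    by (simp add: sum_distrib_left sum.swap[of _ "{..<n}"] algebra_simps)
  have "(\<Sum>j<n. (x j - (\<Sum>b<r. d b * E b j))\<^sup>2)
      = (\<Sum>j<n. (x j)\<^sup>2) - 2 * (\<Sum>j<n. x j * (\<Sum>b<r. d b * E b j))
        + (\<Sum>j<n. (\<Sum>b<r. d b * E b j)\<^sup>2)"
    by (simp add: power2_diff sum.distrib sum_subtractf sum_distrib_left mult.assoc)
  also have "\<dots> = (\<Sum>j<n. (x j)\<^sup>2) - 2 * (\<Sum>b<r. d b * (\<Sum>j<n. E b j * x j)) + (\<Sum>b<r. (d b)\<^sup>2)"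
    unfolding cross sum_square_orthonormal_combination[OF assms] ..
  also have "\<dots> = (\<Sum>j<n. (x j)\<^sup>2) - (\<Sum>b<r. (\<Sum>j<n. E b j * x j)\<^sup>2)
        + (\<Sum>b<r. (d b - (\<Sum>j<n. E b j * x j))\<^sup>2)"
    by (simp add: power2_diff sum.distrib sum_subtractf sum_distrib_left algebra_simps)
  finally show ?thesis .
qed

lemma bessel_identity:
  assumes "orthonormal_rows r n E"
  shows "(\<Sum>j<n. (x j - (\<Sum>b<r. (\<Sum>i<n. E b i * x i) * E b j))\<^sup>2)
       = (\<Sum>j<n. (x j)\<^sup>2) - (\<Sum>b<r. (\<Sum>j<n. E b j * x j)\<^sup>2)"
  using sum_square_residual_orthonormal[OF assms, of x "\<lambda>b. \<Sum>i<n. E b i * x i"] by simp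

lemma bessel_inequality:
  assumes "orthonormal_rows r n E"
  shows "(\<Sum>b<r. (\<Sum>j<n. E b j * x j)\<^sup>2) \<le> (\<Sum>j<n. (x j)\<^sup>2)"
  using bessel_identity[OF assms, of x] sum_nonneg[of "{..<n}"] by (smt (verit) zero_le_power2)

lemma weighted_sum_le_top_sum:
  fixes t w :: "nat \<Rightarrow> real"
  assumes "0 < r" "r \<le> k" "\<And>l. l < k \<Longrightarrow> 0 \<le> w l \<and> w l \<le> 1"
    "\<And>i j. i \<le> j \<Longrightarrow> j < k \<Longrightarrow> t j \<le> t i"
  shows "(\<Sum>l<k. t l * w l) \<le> (\<Sum>l<r. t l) - t (r - 1) * (real r - (\<Sum>l<k. w l))"
proof -
  have split_at_r: "sum f {..<k} = sum f {..<r} + sum f {r..<k}" for f :: "nat \<Rightarrow> real"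
    using assms(2) by (metis sum.atLeastLessThan_concat le0 lessThan_atLeast0)
  have head: "(\<Sum>l<r. t (r - 1) * (1 - w l)) \<le> (\<Sum>l<r. t l * (1 - w l))"
    using assms by (intro sum_mono mult_right_mono) auto
  have tail: "(\<Sum>l\<in>{r..<k}. t l * w l) \<le> (\<Sum>l\<in>{r..<k}. t (r - 1) * w l)"
    using assms by (intro sum_mono mult_right_mono) auto
  show ?thesis
    using head tail unfolding split_at_r[of "\<lambda>l. t l * w l"] split_at_r[of w]
    by (simp add: algebra_simps sum_subtractf sum_distrib_left sum_distrib_right)
qed

locale ky_fan_setting =
  fixes A U V :: "nat \<Rightarrow> nat \<Rightarrow> real" and s :: "nat \<Rightarrow> real" and p n k :: nat
  assumes U_orthonormal: "orthonormal_rows k p (\<lambda>l a. U a l)"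
    and V_orthonormal: "orthonormal_rows k n V"
    and A_eq: "\<And>a j. a < p \<Longrightarrow> j < n \<Longrightarrow> A a j = (\<Sum>l<k. U a l * s l * V l j)"
    and s_pos: "\<And>l. l < k \<Longrightarrow> 0 < s l"
    and s_decreasing: "\<And>i j. i \<le> j \<Longrightarrow> j < k \<Longrightarrow> s j \<le> s i"
begin

definition alignment :: "nat \<Rightarrow> (nat \<Rightarrow> nat \<Rightarrow> real) \<Rightarrow> nat \<Rightarrow> real" where
  "alignment r X l = (\<Sum>b<r. (\<Sum>j<n. V l j * X b j)\<^sup>2)"

lemma projected_energy_eq:
  "(\<Sum>a<p. \<Sum>b<r. (\<Sum>j<n. A a j * X b j)\<^sup>2) = (\<Sum>l<k. (s l)\<^sup>2 * alignment r X l)"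
proof -
  have row: "(\<Sum>j<n. A a j * X b j) = (\<Sum>l<k. (s l * (\<Sum>j<n. V l j * X b j)) * U a l)"
    if "a < p" for a b
  proof -
    have "(\<Sum>j<n. A a j * X b j) = (\<Sum>j<n. \<Sum>l<k. U a l * s l * V l j * X b j)"
      using that by (intro sum.cong refl) (simp add: A_eq sum_distrib_right)
    also have "\<dots> = (\<Sum>l<k. (s l * (\<Sum>j<n. V l j * X b j)) * U a l)"
      by (subst sum.swap) (simp add: sum_distrib_left algebra_simps)
    finally show ?thesis .
  qed
  have "(\<Sum>a<p. \<Sum>b<r. (\<Sum>j<n. A a j * X b j)\<^sup>2)
      = (\<Sum>b<r. \<Sum>a<p. (\<Sum>l<k. (s l * (\<Sum>j<n. V l j * X b j)) * U a l)\<^sup>2)"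
    by (subst sum.swap) (simp add: row)
  also have "\<dots> = (\<Sum>b<r. \<Sum>l<k. (s l)\<^sup>2 * (\<Sum>j<n. V l j * X b j)\<^sup>2)"
    by (simp add: sum_square_orthonormal_combination[OF U_orthonormal] power_mult_distrib)
  also have "\<dots> = (\<Sum>l<k. (s l)\<^sup>2 * alignment r X l)"
    by (subst sum.swap) (simp add: alignment_def sum_distrib_left)
  finally show ?thesis .
qed

lemma alignment_bounds:
  assumes "orthonormal_rows r n X" "l < k"
  shows "0 \<le> alignment r X l" "alignment r X l \<le> 1"
proof -
  show "0 \<le> alignment r X l" unfolding alignment_def by (intro sum_nonneg) auto
  have "alignment r X l \<le> (\<Sum>j<n. (V l j)\<^sup>2)"
    using bessel_inequality[OF assms(1), of "V l"] unfolding alignment_def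
    by (simp add: mult.commute)
  with orthonormal_rows_norm[OF V_orthonormal assms(2)] show "alignment r X l \<le> 1" by simp
qed

lemma alignment_sum_eq:
  assumes "orthonormal_rows r n X"
  shows "(\<Sum>l<k. alignment r X l)
       = real r - (\<Sum>b<r. \<Sum>j<n. (X b j - (\<Sum>l<k. (\<Sum>i<n. V l i * X b i) * V l j))\<^sup>2)"
proof -
  have "(\<Sum>b<r. \<Sum>j<n. (X b j - (\<Sum>l<k. (\<Sum>i<n. V l i * X b i) * V l j))\<^sup>2)
      = (\<Sum>b<r. 1 - (\<Sum>l<k. (\<Sum>j<n. V l j * X b j)\<^sup>2))"
    using orthonormal_rows_norm[OF assms]
    by (intro sum.cong refl) (simp add: bessel_identity[OF V_orthonormal])
  also have "\<dots> = real r - (\<Sum>l<k. alignment r X l)"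
    by (simp add: sum_subtractf alignment_def sum.swap[of _ "{..<k}"])
  finally show ?thesis by simp
qed

lemma projected_energy_deficit:
  assumes "orthonormal_rows r n X" "0 < r" "r \<le> k"
  shows "(\<Sum>a<p. \<Sum>b<r. (\<Sum>j<n. A a j * X b j)\<^sup>2)
       \<le> (\<Sum>l<r. (s l)\<^sup>2) - (s (r - 1))\<^sup>2 * (real r - (\<Sum>l<k. alignment r X l))"
proof -
  have "(s j)\<^sup>2 \<le> (s i)\<^sup>2" if "i \<le> j" "j < k" for i j
    using s_decreasing[OF that] s_pos[OF that(2)] by (simp add: power_mono)
  then show ?thesis
    unfolding projected_energy_eq
    using assms alignment_bounds[OF assms(1)] by (intro weighted_sum_le_top_sum) auto
qed

lemma alignment_sum_le:
  assumes "orthonormal_rows r n X"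
  shows "(\<Sum>l<k. alignment r X l) \<le> real r"
  unfolding alignment_sum_eq[OF assms] by (simp add: sum_nonneg)

theorem ky_fan_inequality:
  assumes "orthonormal_rows r n X" "0 < r" "r \<le> k"
  shows "(\<Sum>a<p. \<Sum>b<r. (\<Sum>j<n. A a j * X b j)\<^sup>2) \<le> (\<Sum>l<r. (s l)\<^sup>2)"
  using projected_energy_deficit[OF assms] alignment_sum_le[OF assms(1)]
  by (smt (verit) mult_nonneg_nonneg zero_le_power2)

theorem ky_fan_equality_rows_in_span:
  assumes "orthonormal_rows r n X" "0 < r" "r \<le> k"
    and "(\<Sum>l<r. (s l)\<^sup>2) \<le> (\<Sum>a<p. \<Sum>b<r. (\<Sum>j<n. A a j * X b j)\<^sup>2)"
    and "b < r" "j < n"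
  shows "X b j = (\<Sum>l<k. (\<Sum>i<n. V l i * X b i) * V l j)"
proof -
  define residual where "residual b j = (X b j - (\<Sum>l<k. (\<Sum>i<n. V l i * X b i) * V l j))\<^sup>2" for b j
  have "0 < s (r - 1)" using assms(2,3) by (intro s_pos) simp
  hence "0 < (s (r - 1))\<^sup>2" by simp
  with projected_energy_deficit[OF assms(1-3)] assms(4)
  have "real r - (\<Sum>l<k. alignment r X l) \<le> 0"
    by (smt (verit) mult_pos_pos)
  hence "(\<Sum>b<r. \<Sum>j<n. residual b j) = 0"
    unfolding alignment_sum_eq[OF assms(1)] residual_def
    by (smt (verit) sum_nonneg zero_le_power2)
  moreover have residual_nonneg: "0 \<le> residual b j" for b j unfolding residual_def by simp
  ultimately have "sum (residual b) {..<n} = 0"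
    using assms(5) by (simp add: sum_nonneg_eq_0_iff sum_nonneg)
  hence "residual b j = 0"
    using assms(6) residual_nonneg by (simp add: sum_nonneg_eq_0_iff)
  thus ?thesis unfolding residual_def by simp
qed

lemma projected_energy_rows_of_V:
  assumes "r \<le> k"
  shows "(\<Sum>a<p. \<Sum>b<r. (\<Sum>j<n. A a j * V b j)\<^sup>2) = (\<Sum>l<r. (s l)\<^sup>2)"
proof -
  have "alignment r V l = (if l < r then 1 else 0)" if "l < k" for l
  proof -
    have "(\<Sum>j<n. V l j * V b j) = (if l = b then 1 else 0)" if "b < r" for b
      using V_orthonormal \<open>l < k\<close> \<open>b < r\<close> assms unfolding orthonormal_rows_def by simp
    hence "alignment r V l = (\<Sum>b<r. if l = b then 1 else 0)"
      unfolding alignment_def by (intro sum.cong refl) simp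
    thus ?thesis by simp
  qed
  hence "(\<Sum>l<k. (s l)\<^sup>2 * alignment r V l) = (\<Sum>l<k. if l < r then (s l)\<^sup>2 else 0)"
    by (intro sum.cong refl) simp
  also have "\<dots> = (\<Sum>l\<in>{..<k} \<inter> {..<r}. (s l)\<^sup>2)"
    by (simp add: sum.inter_restrict)
  also have "{..<k} \<inter> {..<r} = {..<r}" using assms by auto
  finally show ?thesis unfolding projected_energy_eq .
qed

lemma V_row_sum_zero:
  assumes "\<And>a. a < p \<Longrightarrow> (\<Sum>j<n. A a j) = 0" and "l < k"
  shows "(\<Sum>j<n. V l j) = 0"
proof -
  have "0 = (\<Sum>a<p. U a l * (\<Sum>j<n. A a j))" by (simp add: assms(1))
  also have "\<dots> = (\<Sum>a<p. \<Sum>j<n. \<Sum>m<k. U a l * U a m * (s m * V m j))"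
    by (intro sum.cong refl) (simp add: A_eq sum_distrib_left mult.assoc)
  also have "\<dots> = (\<Sum>a<p. \<Sum>m<k. \<Sum>j<n. U a l * U a m * (s m * V m j))"
    by (rule sum.cong[OF refl], rule sum.swap)
  also have "\<dots> = (\<Sum>m<k. \<Sum>a<p. \<Sum>j<n. U a l * U a m * (s m * V m j))"
    by (rule sum.swap)
  also have "\<dots> = (\<Sum>m<k. \<Sum>a<p. U a l * U a m * (s m * (\<Sum>j<n. V m j)))"
    by (simp add: sum_distrib_left)
  also have "\<dots> = (\<Sum>m<k. (\<Sum>a<p. U a l * U a m) * (s m * (\<Sum>j<n. V m j)))"
    by (simp add: sum_distrib_right)
  also have "\<dots> = (\<Sum>m<k. if l = m then s l * (\<Sum>j<n. V l j) else 0)"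
    using U_orthonormal assms(2) unfolding orthonormal_rows_def by (intro sum.cong refl) simp
  also have "\<dots> = s l * (\<Sum>j<n. V l j)" using assms(2) by simp
  finally show ?thesis using s_pos[OF assms(2)] by simp
qed

end

lemma orthonormal_rows_iff_mult_transpose:
  assumes "X \<in> carrier_mat m n"
  shows "X * transpose_mat X = 1\<^sub>m m \<longleftrightarrow> orthonormal_rows m n (\<lambda>b j. X $$ (b,j))"
proof -
  have entry: "(X * transpose_mat X) $$ (b,c) = (\<Sum>j<n. X $$ (b,j) * X $$ (c,j))"
    if "b < m" "c < m" for b c
    using assms that by (simp add: scalar_prod_def atLeast0LessThan)
  show ?thesis
  proof
    assume XX: "X * transpose_mat X = 1\<^sub>m m"
    show "orthonormal_rows m n (\<lambda>b j. X $$ (b,j))"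
      unfolding orthonormal_rows_def
    proof (intro allI impI)
      fix b c assume "b < m" "c < m"
      with entry[OF this] show "(\<Sum>j<n. X $$ (b,j) * X $$ (c,j)) = (if b = c then 1 else 0)"
        unfolding XX by simp
    qed
  next
    assume "orthonormal_rows m n (\<lambda>b j. X $$ (b,j))"
    then show "X * transpose_mat X = 1\<^sub>m m"
      unfolding orthonormal_rows_def using assms entry by (intro eq_matI) auto
  qed
qed

lemma index_mult_ones_vec:
  "X \<in> carrier_mat m n \<Longrightarrow> b < m \<Longrightarrow> (X *\<^sub>v ones_vec n) $ b = (\<Sum>j<n. X $$ (b,j))"
  by (simp add: scalar_prod_def atLeast0LessThan ones_vec_def)

lemma mult_ones_vec_eq_zero_iff:
  assumes "X \<in> carrier_mat m n"
  shows "X *\<^sub>v ones_vec n = 0\<^sub>v m \<longleftrightarrow> (\<forall>b<m. (\<Sum>j<n. X $$ (b,j)) = 0)"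
proof -
  note entry = index_mult_ones_vec[OF assms]
  show ?thesis
  proof
    assume "X *\<^sub>v ones_vec n = 0\<^sub>v m"
    then show "\<forall>b<m. (\<Sum>j<n. X $$ (b,j)) = 0" using entry by (metis index_zero_vec(1))
  next
    assume "\<forall>b<m. (\<Sum>j<n. X $$ (b,j)) = 0"
    then show "X *\<^sub>v ones_vec n = 0\<^sub>v m" using assms entry by (intro eq_vecI) auto
  qed
qed

lemma frob_sq_mult_transpose:
  assumes "A \<in> carrier_mat p n" "X \<in> carrier_mat r n"
  shows "frob_sq (A * transpose_mat X) = (\<Sum>a<p. \<Sum>b<r. (\<Sum>j<n. A $$ (a,j) * X $$ (b,j))\<^sup>2)"
  unfolding frob_sq_def using assms
  by (intro sum.cong refl) (auto simp: scalar_prod_def atLeast0LessThan)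

lemma frob_sq_residual:
  assumes "A \<in> carrier_mat p n" "D \<in> carrier_mat p r" "X \<in> carrier_mat r n"
    and "X * transpose_mat X = 1\<^sub>m r"
  shows "frob_sq (A - D * X)
       = frob_sq A - frob_sq (A * transpose_mat X) + frob_sq (D - A * transpose_mat X)"
proof -
  have X: "orthonormal_rows r n (\<lambda>b j. X $$ (b,j))"
    using assms(3,4) orthonormal_rows_iff_mult_transpose by blast
  define c where "c a b = (\<Sum>j<n. A $$ (a,j) * X $$ (b,j))" for a b
  have row: "(\<Sum>j<n. (A $$ (a,j) - (\<Sum>b<r. D $$ (a,b) * X $$ (b,j)))\<^sup>2)
      = (\<Sum>j<n. (A $$ (a,j))\<^sup>2) - (\<Sum>b<r. (c a b)\<^sup>2) + (\<Sum>b<r. (D $$ (a,b) - c a b)\<^sup>2)" for a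
  proof -
    have "(\<Sum>j<n. X $$ (b,j) * A $$ (a,j)) = c a b" for b
      unfolding c_def by (simp add: mult.commute)
    then show ?thesis
      using sum_square_residual_orthonormal[OF X, of "\<lambda>j. A $$ (a,j)" "\<lambda>b. D $$ (a,b)"] by simp
  qed
  have "frob_sq (A - D * X)
      = (\<Sum>a<p. \<Sum>j<n. (A $$ (a,j) - (\<Sum>b<r. D $$ (a,b) * X $$ (b,j)))\<^sup>2)"
    unfolding frob_sq_def using assms
    by (intro sum.cong refl) (auto simp: scalar_prod_def atLeast0LessThan)
  also have "\<dots> = (\<Sum>a<p. \<Sum>j<n. (A $$ (a,j))\<^sup>2) - (\<Sum>a<p. \<Sum>b<r. (c a b)\<^sup>2)
      + (\<Sum>a<p. \<Sum>b<r. (D $$ (a,b) - c a b)\<^sup>2)"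
    unfolding row by (simp add: sum.distrib sum_subtractf)
  also have "\<dots> = frob_sq A - frob_sq (A * transpose_mat X) + frob_sq (D - A * transpose_mat X)"
  proof -
    have "frob_sq A = (\<Sum>a<p. \<Sum>j<n. (A $$ (a,j))\<^sup>2)"
      using assms(1) by (simp add: frob_sq_def)
    moreover have "frob_sq (A * transpose_mat X) = (\<Sum>a<p. \<Sum>b<r. (c a b)\<^sup>2)"
      unfolding c_def by (rule frob_sq_mult_transpose[OF assms(1,3)])
    moreover have "frob_sq (D - A * transpose_mat X) = (\<Sum>a<p. \<Sum>b<r. (D $$ (a,b) - c a b)\<^sup>2)"
      unfolding frob_sq_def c_def using assms
      by (intro sum.cong refl) (auto simp: scalar_prod_def atLeast0LessThan)
    ultimately show ?thesis by simp
  qed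
  finally show ?thesis .
qed

lemma pca_solution_iff_max_projected_energy:
  assumes A: "A \<in> carrier_mat p n"
    and bound: "\<And>X. X \<in> carrier_mat r n \<Longrightarrow> X * transpose_mat X = 1\<^sub>m r
                  \<Longrightarrow> frob_sq (A * transpose_mat X) \<le> T"
    and X0: "X0 \<in> carrier_mat r n" "X0 * transpose_mat X0 = 1\<^sub>m r"
      "frob_sq (A * transpose_mat X0) = T"
  shows "pca_solution p n r A X \<longleftrightarrow>
         X \<in> carrier_mat r n \<and> X * transpose_mat X = 1\<^sub>m r \<and> frob_sq (A * transpose_mat X) = T"
proof -
  have DX: "A * transpose_mat X \<in> carrier_mat p r" if "X \<in> carrier_mat r n" for X
    using A that by simp
  have residual_ge: "frob_sq A - frob_sq (A * transpose_mat X) \<le> frob_sq (A - D * X)"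
    if "D \<in> carrier_mat p r" "X \<in> carrier_mat r n" "X * transpose_mat X = 1\<^sub>m r" for D X
    unfolding frob_sq_residual[OF A that] by (simp add: frob_sq_def sum_nonneg)
  have residual_opt: "frob_sq (A - A * transpose_mat X * X) = frob_sq A - frob_sq (A * transpose_mat X)"
    if "X \<in> carrier_mat r n" "X * transpose_mat X = 1\<^sub>m r" for X
    unfolding frob_sq_residual[OF A DX[OF that(1)] that] by (simp add: frob_sq_def)
  show ?thesis
  proof
    assume sol: "pca_solution p n r A X"
    then have X: "X \<in> carrier_mat r n" "X * transpose_mat X = 1\<^sub>m r"
      unfolding pca_solution_def by auto
    from sol obtain D where D: "D \<in> carrier_mat p r"
      and minimal: "\<And>D' X'. D' \<in> carrier_mat p r \<Longrightarrow> X' \<in> carrier_mat r n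
                  \<Longrightarrow> X' * transpose_mat X' = 1\<^sub>m r \<Longrightarrow> frob_sq (A - D * X) \<le> frob_sq (A - D' * X')"
      unfolding pca_solution_def by blast
    have "frob_sq A - frob_sq (A * transpose_mat X) \<le> frob_sq (A - D * X)"
      by (rule residual_ge[OF D X])
    also have "\<dots> \<le> frob_sq (A - A * transpose_mat X0 * X0)"
      by (rule minimal[OF DX[OF X0(1)] X0(1,2)])
    also have "\<dots> = frob_sq A - T"
      using residual_opt[OF X0(1,2)] X0(3) by simp
    finally have "T \<le> frob_sq (A * transpose_mat X)" by simp
    with bound[OF X] X show "X \<in> carrier_mat r n \<and> X * transpose_mat X = 1\<^sub>m r
      \<and> frob_sq (A * transpose_mat X) = T" by simp
  next
    assume "X \<in> carrier_mat r n \<and> X * transpose_mat X = 1\<^sub>m r \<and> frob_sq (A * transpose_mat X) = T"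
    then have X: "X \<in> carrier_mat r n" "X * transpose_mat X = 1\<^sub>m r"
      and energy: "frob_sq (A * transpose_mat X) = T" by auto
    show "pca_solution p n r A X"
      unfolding pca_solution_def
    proof (intro conjI bexI[where x = "A * transpose_mat X"] ballI impI)
      fix D' X' :: "real mat"
      assume D': "D' \<in> carrier_mat p r" and X': "X' \<in> carrier_mat r n" "X' * transpose_mat X' = 1\<^sub>m r"
      have "frob_sq (A - A * transpose_mat X * X) = frob_sq A - T"
        using residual_opt[OF X] energy by simp
      also have "\<dots> \<le> frob_sq A - frob_sq (A * transpose_mat X')"
        using bound[OF X'] by simp
      also have "\<dots> \<le> frob_sq (A - D' * X')"
        by (rule residual_ge[OF D' X'])
      finally show "frob_sq (A - A * transpose_mat X * X) \<le> frob_sq (A - D' * X')" .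
    qed (use X DX in auto)
  qed
qed

lemma X_tilde_carrier: "X \<in> carrier_mat r n \<Longrightarrow> X_tilde n X \<in> carrier_mat (r + 1) n"
  unfolding X_tilde_def by simp

lemma X_tilde_orthonormal_iff:
  assumes "0 < n" "X \<in> carrier_mat r n"
  shows "X_tilde n X * transpose_mat (X_tilde n X) = 1\<^sub>m (r + 1)
     \<longleftrightarrow> X * transpose_mat X = 1\<^sub>m r \<and> X *\<^sub>v ones_vec n = 0\<^sub>v r"
proof -
  define Y where "Y b j = X_tilde n X $$ (b,j)" for b j
  have Y0: "Y 0 j = 1 / sqrt (real n)" if "j < n" for j
    unfolding Y_def X_tilde_def using assms that by auto
  have YSuc: "Y (Suc b) j = X $$ (b,j)" if "b < r" "j < n" for b j
    unfolding Y_def X_tilde_def using assms that by auto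
  have "(\<Sum>j<n. Y 0 j * Y 0 j) = (\<Sum>j<n. 1 / real n)"
    by (intro sum.cong refl) (simp add: Y0)
  then have norm0: "(\<Sum>j<n. Y 0 j * Y 0 j) = 1"
    using assms(1) by simp
  have cross: "(\<Sum>j<n. Y 0 j * Y (Suc b) j) = (\<Sum>j<n. X $$ (b,j)) / sqrt (real n)"
    "(\<Sum>j<n. Y (Suc b) j * Y 0 j) = (\<Sum>j<n. X $$ (b,j)) / sqrt (real n)" if "b < r" for b
    using that by (simp_all add: Y0 YSuc sum_divide_distrib)
  have rows: "(\<Sum>j<n. Y (Suc b) j * Y (Suc c) j) = (\<Sum>j<n. X $$ (b,j) * X $$ (c,j))"
    if "b < r" "c < r" for b c
    using that by (simp add: YSuc)
  have "orthonormal_rows (Suc r) n Y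
      \<longleftrightarrow> orthonormal_rows r n (\<lambda>b j. X $$ (b,j)) \<and> (\<forall>b<r. (\<Sum>j<n. X $$ (b,j)) = 0)"
    unfolding orthonormal_rows_def All_less_Suc2 using assms(1)
    by (auto simp: norm0 cross rows)
  then show ?thesis
    using orthonormal_rows_iff_mult_transpose[OF X_tilde_carrier[OF assms(2)]]
      orthonormal_rows_iff_mult_transpose[OF assms(2)] mult_ones_vec_eq_zero_iff[OF assms(2)]
    unfolding Y_def by simp
qed

lemma mtrace_quadratic_form:
  assumes "Y \<in> carrier_mat m n" "L \<in> carrier_mat n n"
  shows "mtrace (Y * L * transpose_mat Y)
       = (\<Sum>b<m. \<Sum>i<n. \<Sum>j<n. Y $$ (b,i) * L $$ (i,j) * Y $$ (b,j))"
proof -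
  have "mtrace (Y * L * transpose_mat Y)
      = (\<Sum>b<m. \<Sum>i<n. Y $$ (b,i) * (\<Sum>j<n. L $$ (i,j) * Y $$ (b,j)))"
    unfolding mtrace_def using assms
    by (intro sum.cong refl) (auto simp: scalar_prod_def atLeast0LessThan)
  also have "\<dots> = (\<Sum>b<m. \<Sum>i<n. \<Sum>j<n. Y $$ (b,i) * L $$ (i,j) * Y $$ (b,j))"
    by (simp add: sum_distrib_left mult.assoc)
  finally show ?thesis .
qed

locale centered_data =
  fixes p n :: nat and A :: "real mat"
  assumes A_carrier: "A \<in> carrier_mat p n"
    and A_centered: "A *\<^sub>v ones_vec n = 0\<^sub>v p"
    and n_pos: "0 < n"
begin

lemma row_sum_zero: "a < p \<Longrightarrow> (\<Sum>j<n. A $$ (a,j)) = 0"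
  using A_centered mult_ones_vec_eq_zero_iff[OF A_carrier] by blast

lemma gram_entry:
  "i < n \<Longrightarrow> j < n \<Longrightarrow> (transpose_mat A * A) $$ (i,j) = (\<Sum>a<p. A $$ (a,i) * A $$ (a,j))"
  using A_carrier by (simp add: scalar_prod_def atLeast0LessThan)

lemma gram_entry_eq_col_inner:
  "i < n \<Longrightarrow> j < n \<Longrightarrow> (transpose_mat A * A) $$ (i,j) = col A i \<bullet> col A j"
  using A_carrier by simp

lemma gram_row_sum_zero:
  assumes "i < n"
  shows "(\<Sum>j<n. (transpose_mat A * A) $$ (i,j)) = 0"
proof -
  have "(\<Sum>j<n. (transpose_mat A * A) $$ (i,j)) = (\<Sum>j<n. \<Sum>a<p. A $$ (a,i) * A $$ (a,j))"
    using assms by (simp add: gram_entry)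
  also have "\<dots> = (\<Sum>a<p. A $$ (a,i) * (\<Sum>j<n. A $$ (a,j)))"
    by (subst sum.swap) (simp add: sum_distrib_left)
  finally show ?thesis by (simp add: row_sum_zero)
qed

lemma gram_entry_ge_neg_beta:
  assumes "i < n" "j < n"
  shows "- beta_of A \<le> (transpose_mat A * A) $$ (i,j)"
proof -
  let ?G = "{(transpose_mat A * A) $$ (i,j) | i j. i < dim_col A \<and> j < dim_col A}"
  have "?G \<subseteq> (\<lambda>(i,j). (transpose_mat A * A) $$ (i,j)) ` ({..<n} \<times> {..<n})"
    using A_carrier by auto
  then have "finite ?G" by (rule finite_subset) simp
  moreover have "(transpose_mat A * A) $$ (i,j) \<in> ?G" using assms A_carrier by blast
  ultimately show ?thesis unfolding beta_of_def by (simp add: Min_le del: index_mult_mat)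
qed

text \<open>A zero row sum of the Gram matrix forces a nonpositive entry.\<close>
lemma beta_of_nonneg: "0 \<le> beta_of A"
proof -
  obtain j where "j < n" "(transpose_mat A * A) $$ (0,j) \<le> 0"
  proof (rule ccontr)
    assume "\<not> thesis"
    with that have "\<forall>j\<in>{..<n}. 0 < (transpose_mat A * A) $$ (0,j)" by force
    then have "0 < (\<Sum>j<n. (transpose_mat A * A) $$ (0,j))" using n_pos by (intro sum_pos) auto
    then show False using gram_row_sum_zero[OF n_pos] by simp
  qed
  with gram_entry_ge_neg_beta[OF n_pos] show ?thesis by fastforce
qed

lemma kernel_carrier: "transpose_mat (A_tilde A) * A_tilde A \<in> carrier_mat n n"
proof -
  have "A_tilde A \<in> carrier_mat (p + 1) n" unfolding A_tilde_def using A_carrier by auto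
  then show ?thesis by (metis mult_carrier_mat transpose_carrier_mat)
qed

lemma kernel_entry:
  assumes "i < n" "j < n"
  shows "(transpose_mat (A_tilde A) * A_tilde A) $$ (i,j) = (transpose_mat A * A) $$ (i,j) + beta_of A"
proof -
  have "(transpose_mat (A_tilde A) * A_tilde A) $$ (i,j)
      = (\<Sum>x<Suc p. A_tilde A $$ (x,i) * A_tilde A $$ (x,j))"
    using A_carrier assms by (simp add: A_tilde_def scalar_prod_def atLeast0LessThan)
  also have "\<dots> = sqrt (beta_of A) * sqrt (beta_of A) + (\<Sum>a<p. A $$ (a,i) * A $$ (a,j))"
    unfolding sum.lessThan_Suc_shift using A_carrier assms by (simp add: A_tilde_def)
  finally show ?thesis using beta_of_nonneg assms by (simp add: gram_entry)
qed

lemma kernel_nonneg: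
  "i < n \<Longrightarrow> j < n \<Longrightarrow> 0 \<le> (transpose_mat (A_tilde A) * A_tilde A) $$ (i,j)"
  using kernel_entry gram_entry_ge_neg_beta by fastforce

abbreviation laplacian :: "real mat" where
  "laplacian \<equiv> graph_laplacian (transpose_mat (A_tilde A) * A_tilde A)"

lemma laplacian_carrier: "laplacian \<in> carrier_mat n n"
  using kernel_carrier unfolding graph_laplacian_def by (intro minus_carrier_mat) auto

text \<open>Centering makes every vertex degree equal to n beta.\<close>
lemma laplacian_entry:
  assumes "i < n" "j < n"
  shows "laplacian $$ (i,j)
       = (if i = j then real n * beta_of A else 0) - (beta_of A + (transpose_mat A * A) $$ (i,j))"
proof -
  let ?W = "transpose_mat (A_tilde A) * A_tilde A"
  have degree: "(?W *\<^sub>v ones_vec n) $ i = real n * beta_of A" if "i < n" for i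
  proof -
    have "(?W *\<^sub>v ones_vec n) $ i = (\<Sum>j<n. ?W $$ (i,j))"
      by (rule index_mult_ones_vec[OF kernel_carrier that])
    also have "\<dots> = real n * beta_of A"
      using that by (simp add: kernel_entry sum.distrib gram_row_sum_zero)
    finally show ?thesis .
  qed
  have "laplacian = mat_diag n (\<lambda>i. (?W *\<^sub>v ones_vec n) $ i) - ?W"
    using kernel_carrier unfolding graph_laplacian_def by auto
  then show ?thesis
    using kernel_carrier assms
    by (simp add: mat_diag_def degree kernel_entry del: index_mult_mat_vec index_mult_mat)
qed

lemma laplacian_quadratic_form:
  "(\<Sum>i<n. \<Sum>j<n. y i * laplacian $$ (i,j) * y j)
     = real n * beta_of A * (\<Sum>i<n. (y i)\<^sup>2) - beta_of A * (\<Sum>i<n. y i)\<^sup>2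
       - (\<Sum>a<p. (\<Sum>j<n. A $$ (a,j) * y j)\<^sup>2)"
proof -
  have diagonal: "(\<Sum>i<n. \<Sum>j<n. y i * (if i = j then c else 0) * y j) = c * (\<Sum>i<n. (y i)\<^sup>2)"
    for c :: real
  proof -
    have "(\<Sum>j<n. y i * (if i = j then c else 0) * y j) = (\<Sum>j<n. if i = j then c * y i * y i else 0)"
      for i by (intro sum.cong refl) auto
    then show ?thesis by (simp add: sum_distrib_left power2_eq_square mult.assoc)
  qed
  have all_ones: "(\<Sum>i<n. \<Sum>j<n. y i * beta_of A * y j) = beta_of A * (\<Sum>i<n. y i)\<^sup>2"
    by (simp add: power2_eq_square sum_product sum_distrib_left mult_ac)
  have gram: "(\<Sum>i<n. \<Sum>j<n. y i * (transpose_mat A * A) $$ (i,j) * y j)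
      = (\<Sum>a<p. (\<Sum>j<n. A $$ (a,j) * y j)\<^sup>2)"
  proof -
    have "(\<Sum>i<n. \<Sum>j<n. y i * (transpose_mat A * A) $$ (i,j) * y j)
        = (\<Sum>i<n. \<Sum>j<n. \<Sum>a<p. (A $$ (a,i) * y i) * (A $$ (a,j) * y j))"
      by (intro sum.cong refl) (simp add: gram_entry sum_distrib_left sum_distrib_right mult_ac)
    also have "\<dots> = (\<Sum>a<p. \<Sum>i<n. \<Sum>j<n. (A $$ (a,i) * y i) * (A $$ (a,j) * y j))"
      by (simp add: sum.swap[of _ "{..<p}"])
    also have "\<dots> = (\<Sum>a<p. (\<Sum>j<n. A $$ (a,j) * y j)\<^sup>2)"
      by (simp add: power2_eq_square sum_product)
    finally show ?thesis .
  qed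
  have "(\<Sum>i<n. \<Sum>j<n. y i * laplacian $$ (i,j) * y j)
      = (\<Sum>i<n. \<Sum>j<n. y i * (if i = j then real n * beta_of A else 0) * y j)
        - (\<Sum>i<n. \<Sum>j<n. y i * beta_of A * y j)
        - (\<Sum>i<n. \<Sum>j<n. y i * (transpose_mat A * A) $$ (i,j) * y j)"
    by (simp add: laplacian_entry algebra_simps sum_subtractf sum.distrib)
  then show ?thesis unfolding diagonal all_ones gram .
qed

lemma trace_laplacian:
  assumes X: "X \<in> carrier_mat r n" and orth: "X * transpose_mat X = 1\<^sub>m r"
    and centered: "X *\<^sub>v ones_vec n = 0\<^sub>v r"
  shows "mtrace (X_tilde n X * laplacian * transpose_mat (X_tilde n X))
       = real n * beta_of A * real r - frob_sq (A * transpose_mat X)"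
proof -
  define Q where "Q y = real n * beta_of A * (\<Sum>i<n. (y i)\<^sup>2) - beta_of A * (\<Sum>i<n. y i)\<^sup>2
       - (\<Sum>a<p. (\<Sum>j<n. A $$ (a,j) * y j)\<^sup>2)" for y :: "nat \<Rightarrow> real"
  have rows: "orthonormal_rows r n (\<lambda>b j. X $$ (b,j))" "\<forall>b<r. (\<Sum>j<n. X $$ (b,j)) = 0"
    using orth centered orthonormal_rows_iff_mult_transpose[OF X] mult_ones_vec_eq_zero_iff[OF X]
    by auto
  have "Q (\<lambda>j. X_tilde n X $$ (0,j)) = Q (\<lambda>j. 1 / sqrt (real n))"
    unfolding Q_def using X by (simp add: X_tilde_def)
  also have "\<dots> = 0"
  proof -
    have "(\<Sum>i<n. (1 / sqrt (real n))\<^sup>2) = 1" "(\<Sum>i<n. 1 / sqrt (real n))\<^sup>2 = real n"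
      using n_pos by (simp_all add: power_divide power2_eq_square)
    moreover have "(\<Sum>j<n. A $$ (a,j) * (1 / sqrt (real n))) = 0" if "a < p" for a
      using row_sum_zero[OF that] by (simp add: sum_divide_distrib[symmetric])
    ultimately show ?thesis unfolding Q_def by simp
  qed
  finally have first_row: "Q (\<lambda>j. X_tilde n X $$ (0,j)) = 0" .
  have other_rows: "Q (\<lambda>j. X_tilde n X $$ (Suc b,j))
      = real n * beta_of A - (\<Sum>a<p. (\<Sum>j<n. A $$ (a,j) * X $$ (b,j))\<^sup>2)" if "b < r" for b
  proof -
    have "Q (\<lambda>j. X_tilde n X $$ (Suc b,j)) = Q (\<lambda>j. X $$ (b,j))"
      unfolding Q_def using X that by (simp add: X_tilde_def)
    also have "\<dots> = real n * beta_of A - (\<Sum>a<p. (\<Sum>j<n. A $$ (a,j) * X $$ (b,j))\<^sup>2)"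
      using rows that orthonormal_rows_norm[OF rows(1) that] unfolding Q_def by simp
    finally show ?thesis .
  qed
  have "mtrace (X_tilde n X * laplacian * transpose_mat (X_tilde n X))
      = (\<Sum>b<Suc r. Q (\<lambda>j. X_tilde n X $$ (b,j)))"
    unfolding mtrace_quadratic_form[OF X_tilde_carrier[OF X] laplacian_carrier] Q_def
    by (simp add: laplacian_quadratic_form)
  also have "\<dots> = (\<Sum>b<r. real n * beta_of A - (\<Sum>a<p. (\<Sum>j<n. A $$ (a,j) * X $$ (b,j))\<^sup>2))"
    unfolding sum.lessThan_Suc_shift first_row by (simp add: other_rows)
  also have "\<dots> = real n * beta_of A * real r - frob_sq (A * transpose_mat X)"
    unfolding frob_sq_mult_transpose[OF A_carrier X]
    by (simp add: sum_subtractf sum.swap[of _ "{..<p}"])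
  finally show ?thesis .
qed

lemma le_solution_iff_max_projected_energy:
  assumes bound: "\<And>X. X \<in> carrier_mat r n \<Longrightarrow> X * transpose_mat X = 1\<^sub>m r
                  \<Longrightarrow> X *\<^sub>v ones_vec n = 0\<^sub>v r \<Longrightarrow> frob_sq (A * transpose_mat X) \<le> T"
    and X0: "X0 \<in> carrier_mat r n" "X0 * transpose_mat X0 = 1\<^sub>m r" "X0 *\<^sub>v ones_vec n = 0\<^sub>v r"
      "frob_sq (A * transpose_mat X0) = T"
  shows "le_solution n r laplacian X \<longleftrightarrow>
         X \<in> carrier_mat r n \<and> X * transpose_mat X = 1\<^sub>m r \<and> X *\<^sub>v ones_vec n = 0\<^sub>v r
         \<and> frob_sq (A * transpose_mat X) = T"
proof -
  have feasible: "X_tilde n X * transpose_mat (X_tilde n X) = 1\<^sub>m (r + 1)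
      \<longleftrightarrow> X * transpose_mat X = 1\<^sub>m r \<and> X *\<^sub>v ones_vec n = 0\<^sub>v r"
    if "X \<in> carrier_mat r n" for X
    by (rule X_tilde_orthonormal_iff[OF n_pos that])
  show ?thesis
    unfolding le_solution_def using feasible trace_laplacian bound X0
    by (smt (verit, best))
qed

end

lemma compact_svd_dim_col_pos:
  assumes "compact_svd p n A U S V" "0 < vec_space.rank p A"
  shows "0 < n"
proof (rule ccontr)
  assume "\<not> 0 < n"
  moreover have "V \<in> carrier_mat (vec_space.rank p A) n"
    "V * transpose_mat V = 1\<^sub>m (vec_space.rank p A)"
    using assms(1) unfolding compact_svd_def Let_def by auto
  moreover from calculation(2) assms(2)
  have "(V * transpose_mat V) $$ (0,0) = (\<Sum>j<n. V $$ (0,j) * V $$ (0,j))"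
    by (simp add: scalar_prod_def atLeast0LessThan)
  ultimately show False using assms(2) by simp
qed

locale centered_svd = centered_data p n A for p n :: nat and A :: "real mat" +
  fixes U S V :: "real mat" and r :: nat
  assumes svd: "compact_svd p n A U S V"
    and r_pos: "0 < r" and r_le_rank: "r \<le> vec_space.rank p A"
begin

abbreviation rank :: nat where "rank \<equiv> vec_space.rank p A"

lemma U_carrier: "U \<in> carrier_mat p rank"
  and S_carrier: "S \<in> carrier_mat rank rank"
  and V_carrier: "V \<in> carrier_mat rank n"
  and U_transpose_mult: "transpose_mat U * U = 1\<^sub>m rank"
  and V_mult_transpose: "V * transpose_mat V = 1\<^sub>m rank"
  and S_diagonal: "\<And>i j. i < rank \<Longrightarrow> j < rank \<Longrightarrow> i \<noteq> j \<Longrightarrow> S $$ (i,j) = 0"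
  and S_pos: "\<And>i. i < rank \<Longrightarrow> 0 < S $$ (i,i)"
  and S_decreasing: "\<And>i j. i \<le> j \<Longrightarrow> j < rank \<Longrightarrow> S $$ (j,j) \<le> S $$ (i,i)"
  and A_eq_svd: "A = U * S * V"
  using svd unfolding compact_svd_def Let_def by auto

lemma A_entry_svd:
  assumes "a < p" "j < n"
  shows "A $$ (a,j) = (\<Sum>l<rank. U $$ (a,l) * S $$ (l,l) * V $$ (l,j))"
proof -
  have SV: "(\<Sum>m<rank. S $$ (l,m) * V $$ (m,j)) = S $$ (l,l) * V $$ (l,j)" if "l < rank" for l
  proof -
    have "(\<Sum>m<rank. S $$ (l,m) * V $$ (m,j)) = (\<Sum>m<rank. if l = m then S $$ (l,l) * V $$ (l,j) else 0)"
      using that S_diagonal by (intro sum.cong refl) auto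
    then show ?thesis using that by simp
  qed
  have "A $$ (a,j) = (U * S * V) $$ (a,j)" by (simp only: A_eq_svd[symmetric])
  also have "\<dots> = (\<Sum>l<rank. U $$ (a,l) * (\<Sum>m<rank. S $$ (l,m) * V $$ (m,j)))"
    using assms U_carrier S_carrier V_carrier by (simp add: scalar_prod_def atLeast0LessThan)
  also have "\<dots> = (\<Sum>l<rank. U $$ (a,l) * S $$ (l,l) * V $$ (l,j))"
    by (intro sum.cong refl) (simp add: SV)
  finally show ?thesis .
qed

sublocale ky_fan_setting "\<lambda>a j. A $$ (a,j)" "\<lambda>a l. U $$ (a,l)" "\<lambda>l j. V $$ (l,j)"
  "\<lambda>l. S $$ (l,l)" p n rank
proof
  have "orthonormal_rows rank p (\<lambda>l a. transpose_mat U $$ (l,a))"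
    using orthonormal_rows_iff_mult_transpose[of "transpose_mat U" rank p] U_carrier
      U_transpose_mult by simp
  then show "orthonormal_rows rank p (\<lambda>l a. U $$ (a,l))"
    using U_carrier unfolding orthonormal_rows_def by simp
  show "orthonormal_rows rank n (\<lambda>l j. V $$ (l,j))"
    using orthonormal_rows_iff_mult_transpose[OF V_carrier] V_mult_transpose by simp
qed (use A_entry_svd S_pos S_decreasing in auto)

definition top_energy :: real where
  "top_energy = (\<Sum>l<r. (S $$ (l,l))\<^sup>2)"

lemma projected_energy_le_top:
  assumes "X \<in> carrier_mat r n" "X * transpose_mat X = 1\<^sub>m r"
  shows "frob_sq (A * transpose_mat X) \<le> top_energy"
proof -
  have "orthonormal_rows r n (\<lambda>b j. X $$ (b,j))"
    using assms orthonormal_rows_iff_mult_transpose by blast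
  then show ?thesis
    unfolding top_energy_def frob_sq_mult_transpose[OF A_carrier assms(1)]
    by (rule ky_fan_inequality[OF _ r_pos r_le_rank])
qed

lemma projected_energy_top_imp_centered:
  assumes X: "X \<in> carrier_mat r n" "X * transpose_mat X = 1\<^sub>m r"
    and top: "frob_sq (A * transpose_mat X) = top_energy"
  shows "X *\<^sub>v ones_vec n = 0\<^sub>v r"
proof -
  have rows: "orthonormal_rows r n (\<lambda>b j. X $$ (b,j))"
    using X orthonormal_rows_iff_mult_transpose by blast
  have maximal: "(\<Sum>l<r. (S $$ (l,l))\<^sup>2) \<le> (\<Sum>a<p. \<Sum>b<r. (\<Sum>j<n. A $$ (a,j) * X $$ (b,j))\<^sup>2)"
    using top unfolding top_energy_def frob_sq_mult_transpose[OF A_carrier X(1)] by simp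
  have "(\<Sum>j<n. X $$ (b,j)) = 0" if "b < r" for b
  proof -
    have "(\<Sum>j<n. X $$ (b,j)) = (\<Sum>j<n. \<Sum>l<rank. (\<Sum>i<n. V $$ (l,i) * X $$ (b,i)) * V $$ (l,j))"
      by (rule sum.cong[OF refl], rule ky_fan_equality_rows_in_span[OF rows r_pos r_le_rank maximal that])
        simp
    also have "\<dots> = (\<Sum>l<rank. (\<Sum>i<n. V $$ (l,i) * X $$ (b,i)) * (\<Sum>j<n. V $$ (l,j)))"
      by (subst sum.swap) (simp add: sum_distrib_left)
    also have "\<dots> = 0"
      using V_row_sum_zero[OF row_sum_zero] by simp
    finally show ?thesis .
  qed
  then show ?thesis using mult_ones_vec_eq_zero_iff[OF X(1)] by blast
qed

lemma first_rows_V: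
  shows "first_rows r V \<in> carrier_mat r n"
    and "first_rows r V * transpose_mat (first_rows r V) = 1\<^sub>m r"
    and "first_rows r V *\<^sub>v ones_vec n = 0\<^sub>v r"
    and "frob_sq (A * transpose_mat (first_rows r V)) = top_energy"
proof -
  have entry: "first_rows r V $$ (b,j) = V $$ (b,j)" if "b < r" "j < n" for b j
    unfolding first_rows_def using V_carrier that by simp
  show carrier: "first_rows r V \<in> carrier_mat r n"
    unfolding first_rows_def using V_carrier by simp
  have "orthonormal_rows rank n (\<lambda>l j. V $$ (l,j))" by (rule V_orthonormal)
  then show "first_rows r V * transpose_mat (first_rows r V) = 1\<^sub>m r"
    unfolding orthonormal_rows_iff_mult_transpose[OF carrier] orthonormal_rows_def
    using r_le_rank by (simp add: entry)
  show "first_rows r V *\<^sub>v ones_vec n = 0\<^sub>v r"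
    unfolding mult_ones_vec_eq_zero_iff[OF carrier]
    using V_row_sum_zero[OF row_sum_zero] r_le_rank by (simp add: entry)
  show "frob_sq (A * transpose_mat (first_rows r V)) = top_energy"
    unfolding frob_sq_mult_transpose[OF A_carrier carrier] top_energy_def
    using projected_energy_rows_of_V[OF r_le_rank] by (simp add: entry)
qed

lemma pca_solution_iff:
  "pca_solution p n r A X \<longleftrightarrow>
   X \<in> carrier_mat r n \<and> X * transpose_mat X = 1\<^sub>m r \<and> frob_sq (A * transpose_mat X) = top_energy"
  using pca_solution_iff_max_projected_energy[OF A_carrier projected_energy_le_top first_rows_V(1,2,4)] .

lemma le_solution_iff:
  "le_solution n r laplacian X \<longleftrightarrow>
   X \<in> carrier_mat r n \<and> X * transpose_mat X = 1\<^sub>m r \<and> frob_sq (A * transpose_mat X) = top_energy"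
proof -
  have "le_solution n r laplacian X \<longleftrightarrow> X \<in> carrier_mat r n \<and> X * transpose_mat X = 1\<^sub>m r
      \<and> X *\<^sub>v ones_vec n = 0\<^sub>v r \<and> frob_sq (A * transpose_mat X) = top_energy"
    by (rule le_solution_iff_max_projected_energy[OF projected_energy_le_top first_rows_V])
  then show ?thesis using projected_energy_top_imp_centered by auto
qed

end

theorem proposition1:
  fixes A U S V :: "real mat" and p n r :: nat
  assumes "A \<in> carrier_mat p n"
    and "A *\<^sub>v ones_vec n = 0\<^sub>v p"
    and "0 < r" and "r \<le> vec_space.rank p A"
    and "compact_svd p n A U S V"
  shows "(\<forall>i<n. \<forall>j<n. 0 \<le> (transpose_mat (A_tilde A) * A_tilde A) $$ (i,j))
       \<and> (\<forall>i<n. \<forall>j<n. (transpose_mat (A_tilde A) * A_tilde A) $$ (i,j)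
                         = col A i \<bullet> col A j + beta_of A)
       \<and> (\<forall>X. pca_solution p n r A X
               \<longleftrightarrow> le_solution n r (graph_laplacian (transpose_mat (A_tilde A) * A_tilde A)) X)
       \<and> pca_solution p n r A (first_rows r V)
       \<and> le_solution n r (graph_laplacian (transpose_mat (A_tilde A) * A_tilde A)) (first_rows r V)"
proof -
  have "0 < n" using compact_svd_dim_col_pos assms(3-5) by fastforce
  with assms interpret centered_svd p n A U S V r
    by unfold_locales
  have "\<forall>i<n. \<forall>j<n. 0 \<le> (transpose_mat (A_tilde A) * A_tilde A) $$ (i,j)"
    using kernel_nonneg by blast
  moreover have "\<forall>i<n. \<forall>j<n. (transpose_mat (A_tilde A) * A_tilde A) $$ (i,j)
      = col A i \<bullet> col A j + beta_of A"
    by (intro allI impI) (simp only: kernel_entry gram_entry_eq_col_inner)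
  moreover have "\<forall>X. pca_solution p n r A X \<longleftrightarrow> le_solution n r laplacian X"
    by (simp only: pca_solution_iff le_solution_iff simp_thms)
  moreover have "pca_solution p n r A (first_rows r V)" "le_solution n r laplacian (first_rows r V)"
    by (simp_all only: pca_solution_iff le_solution_iff first_rows_V simp_thms)
  ultimately show ?thesis by (intro conjI)
qed

end
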